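(* Let $\mathbb{F}_q$ be a finite field with $\mathrm{char}(\mathbb{F}_q)>3$ and $3\mid q-1$, let $C$ be the subgroup of cubes in $\mathbb{F}_q^\times$ (of index $3$), and let $z\in\mathbb{F}_q^\times\setminus C$. Let $a,b\in\mathbb{F}_q^\times$. (1) If $a$ and $b$ lie in the same coset of $C$, then $J_3(a,b)$ is conjugate to $J_3(1,1)$. (2) If $a$ and $b$ lie in different cosets of $C$, then $J_3(a,b)$ is conjugate to $J_3(1,z)$ or to $J_3(1,z^2)$.
   Context: $\mathfrak{sl}_3(\mathbb{F}_q)$ is the Lie algebra of $3\times3$ traceless matrices over $\mathbb{F}_q$. Fix a primitive cube root of unity $u\in\mathbb{F}_q$. For nonzero $a,b\in\mathbb{F}_q$, $J_3(a,b)$ denotes the decomposition $\mathfrak{sl}_3(\mathbb{F}_q)=H_0\oplus H_1\oplus H_2\oplus H_3$, where $H_0$ is the subalgebra of traceless diagonal matrices and, for $j=1,2,3$ with $(\lambda_j,\mu_j)=(1,1),(u,u^2),(u^2,u)$ respectively, $H_j=\left\langle \begin{pmatrix}0&1&0\\0&0&\lambda_j a\\ \mu_j ab&0&0\end{pmatrix},\begin{pmatrix}0&0&1\\ \mu_j ab&0&0\\0&\lambda_j b&0\end{pmatrix}\right\rangle_{\mathbb{F}_q}$. (Such a decomposition is called a $J_3$-decomposition.) Two such decompositions are conjugate if there is a Lie algebra automorphism of $\mathfrak{sl}_3(\mathbb{F}_q)$ mapping each component of the first onto exactly one component of the second. *)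

theory Defs
  imports "HOL-Analysis.Analysis"
begin

text \<open>3x3 matrices over a field are modelled as 'a^3^3 (HOL-Analysis); row/column
  indices 1,2,3 are the elements 1,2,3 (= 0) of the numeral type 3.\<close>

definition mat3 :: "'a \<Rightarrow> 'a \<Rightarrow> 'a \<Rightarrow> 'a \<Rightarrow> 'a \<Rightarrow> 'a \<Rightarrow> 'a \<Rightarrow> 'a \<Rightarrow> 'a \<Rightarrow> 'a^3^3" where
  "mat3 a11 a12 a13 a21 a22 a23 a31 a32 a33 =
     (\<chi> i j. if i = 1 then (if j = 1 then a11 else if j = 2 then a12 else a13)
             else if i = 2 then (if j = 1 then a21 else if j = 2 then a22 else a23)
             else (if j = 1 then a31 else if j = 2 then a32 else a33))"

definition sl3 :: "(('a::field)^3^3) set" where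
  "sl3 = {A. trace A = 0}"

definition lie_bracket :: "('a::field)^3^3 \<Rightarrow> 'a^3^3 \<Rightarrow> 'a^3^3" where
  "lie_bracket A B = A ** B - B ** A"

definition msmult :: "'a::field \<Rightarrow> 'a^3^3 \<Rightarrow> 'a^3^3" where
  "msmult c A = (\<chi> i j. c * A $ i $ j)"

definition sl3_aut :: "(('a::field)^3^3 \<Rightarrow> 'a^3^3) \<Rightarrow> bool" where
  "sl3_aut \<phi> \<longleftrightarrow> bij_betw \<phi> sl3 sl3
     \<and> (\<forall>A\<in>sl3. \<forall>B\<in>sl3. \<phi> (A + B) = \<phi> A + \<phi> B)
     \<and> (\<forall>c. \<forall>A\<in>sl3. \<phi> (msmult c A) = msmult c (\<phi> A))
     \<and> (\<forall>A\<in>sl3. \<forall>B\<in>sl3. \<phi> (lie_bracket A B) = lie_bracket (\<phi> A) (\<phi> B))"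

definition span2 :: "('a::field)^3^3 \<Rightarrow> 'a^3^3 \<Rightarrow> ('a^3^3) set" where
  "span2 X Y = {msmult c X + msmult d Y | c d. True}"

definition H0 :: "(('a::field)^3^3) set" where
  "H0 = {A \<in> sl3. \<forall>i j. i \<noteq> j \<longrightarrow> A $ i $ j = 0}"

definition lamJ :: "'a::field \<Rightarrow> nat \<Rightarrow> 'a" where
  "lamJ u j = (if j = 1 then 1 else if j = 2 then u else u ^ 2)"

definition muJ :: "'a::field \<Rightarrow> nat \<Rightarrow> 'a" where
  "muJ u j = (if j = 1 then 1 else if j = 2 then u ^ 2 else u)"

text \<open>The decomposition J_3(a,b) (w.r.t. the cube root of unity u), as the family of
  its components H_0, H_1, H_2, H_3 indexed by 0..3.\<close>
definition J3 :: "'a::field \<Rightarrow> 'a \<Rightarrow> 'a \<Rightarrow> nat \<Rightarrow> ('a^3^3) set" where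
  "J3 u a b j = (if j = 0 then H0 else
     span2 (mat3 0 1 0  0 0 (lamJ u j * a)  (muJ u j * a * b) 0 0)
           (mat3 0 0 1  (muJ u j * a * b) 0 0  0 (lamJ u j * b) 0))"

definition conj_dec :: "(nat \<Rightarrow> (('a::field)^3^3) set) \<Rightarrow> (nat \<Rightarrow> ('a^3^3) set) \<Rightarrow> bool" where
  "conj_dec H H' \<longleftrightarrow> (\<exists>\<phi>. sl3_aut \<phi> \<and> (\<forall>j<4. \<exists>!k. k < 4 \<and> \<phi> ` H j = H' k))"

definition cubes :: "'a::field set" where
  "cubes = {x ^ 3 | x. x \<noteq> 0}"

end

theory Submission
  imports Defs
begin

text \<open>Conjugation by the diagonal matrix \<open>diag(a y\<^sup>2, y, 1)\<close> fixes \<open>H\<^sub>0\<close> and rescales the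
  two generators of each \<open>H\<^sub>j\<close>, turning \<open>J\<^sub>3(a, b)\<close> into \<open>J\<^sub>3(1, b / (a y\<^sup>3))\<close>. So
  \<open>J\<^sub>3(a, b)\<close> is conjugate to \<open>J\<^sub>3(1, c)\<close> whenever \<open>c\<close> lies in the coset of \<open>b / a\<close> modulo
  the cubes. The cube map is three-to-one on \<open>F\<^sup>\<times>\<close>, so the cubes have index 3 with cosets
  \<open>C\<close>, \<open>z C\<close>, \<open>z\<^sup>2 C\<close>, and \<open>c\<close> can be taken in \<open>{1, z, z\<^sup>2}\<close>.\<close>

text \<open>\<open>diag_conj d A = D A D\<^sup>-\<^sup>1\<close> for \<open>D = diag d\<close>.\<close>
definition diag_conj :: "('n \<Rightarrow> 'a::field) \<Rightarrow> 'a^'n^'n \<Rightarrow> 'a^'n^'n" where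
  "diag_conj d A = (\<chi> i j. d i / d j * A $ i $ j)"

lemma diag_conj_add: "diag_conj d (A + B) = diag_conj d A + diag_conj d B"
  by (simp add: diag_conj_def vec_eq_iff algebra_simps)

lemma diag_conj_diff: "diag_conj d (A - B) = diag_conj d A - diag_conj d B"
  by (simp add: diag_conj_def vec_eq_iff algebra_simps)

lemma diag_conj_msmult: "diag_conj d (msmult c A) = msmult c (diag_conj d A)"
  by (simp add: diag_conj_def msmult_def vec_eq_iff algebra_simps)

lemma trace_diag_conj:
  fixes d :: "'n::finite \<Rightarrow> 'a::field"
  assumes "\<And>i. d i \<noteq> 0"
  shows "trace (diag_conj d A) = trace A"
  using assms by (simp add: diag_conj_def trace_def)

lemma diag_conj_mult:
  fixes d :: "'n::finite \<Rightarrow> 'a::field"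
  assumes "\<And>i. d i \<noteq> 0"
  shows "diag_conj d (A ** B) = diag_conj d A ** diag_conj d B"
  using assms
  by (simp add: diag_conj_def matrix_matrix_mult_def vec_eq_iff sum_distrib_left field_simps)

lemma diag_conj_lie_bracket:
  assumes "\<And>i. d i \<noteq> 0"
  shows "diag_conj d (lie_bracket A B) = lie_bracket (diag_conj d A) (diag_conj d B)"
  by (simp add: lie_bracket_def diag_conj_diff diag_conj_mult assms)

lemma diag_conj_diag_conj: "diag_conj d (diag_conj e A) = diag_conj (\<lambda>i. d i * e i) A"
  by (simp add: diag_conj_def vec_eq_iff)

lemma diag_conj_inverse:
  assumes "\<And>i. d i \<noteq> 0"
  shows "diag_conj (\<lambda>i. inverse (d i)) (diag_conj d A) = A"
    and "diag_conj d (diag_conj (\<lambda>i. inverse (d i)) A) = A"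
  using assms by (simp_all add: diag_conj_diag_conj diag_conj_def vec_eq_iff)

lemma sl3_aut_diag_conj:
  assumes "\<And>i. d i \<noteq> 0"
  shows "sl3_aut (diag_conj d)"
proof -
  have "bij_betw (diag_conj d) sl3 sl3"
    by (rule bij_betw_byWitness[where f'="diag_conj (\<lambda>i. inverse (d i))"])
      (auto simp: sl3_def diag_conj_inverse trace_diag_conj assms)
  then show ?thesis
    by (simp add: sl3_aut_def diag_conj_add diag_conj_msmult diag_conj_lie_bracket assms)
qed

lemma diag_conj_in_H0:
  assumes "A \<in> H0" and "\<And>i. d i \<noteq> 0"
  shows "diag_conj d A \<in> H0"
  using assms trace_diag_conj[of d A] by (simp add: H0_def sl3_def diag_conj_def)

lemma diag_conj_H0:
  assumes "\<And>i. d i \<noteq> 0"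
  shows "diag_conj d ` H0 = H0"
proof (intro subset_antisym subsetI)
  fix A :: "'a^3^3" assume "A \<in> H0"
  then have "diag_conj (\<lambda>i. inverse (d i)) A \<in> H0"
    using assms by (simp add: diag_conj_in_H0)
  with diag_conj_inverse(2)[of d, OF assms] show "A \<in> diag_conj d ` H0"
    by (rule image_eqI[OF sym])
qed (use assms diag_conj_in_H0 in blast)

lemma diag_conj_span2: "diag_conj d ` span2 X Y = span2 (diag_conj d X) (diag_conj d Y)"
proof -
  have param: "span2 V W = (\<lambda>(c, e). msmult c V + msmult e W) ` UNIV" for V W :: "'a::field^3^3"
    by (auto simp: span2_def)
  show ?thesis
    unfolding param image_image by (simp add: diag_conj_add diag_conj_msmult case_prod_beta)
qed

lemma msmult_msmult: "msmult c (msmult s X) = msmult (c * s) X"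
  by (simp add: msmult_def vec_eq_iff)

lemma span2_msmult:
  assumes "s \<noteq> 0" and "t \<noteq> 0"
  shows "span2 (msmult s X) (msmult t Y) = span2 X Y"
proof -
  have "msmult c X + msmult e Y = msmult (c / s) (msmult s X) + msmult (e / t) (msmult t Y)"
    for c e
    using assms by (simp add: msmult_msmult)
  then show ?thesis
    unfolding span2_def by (fastforce simp: msmult_msmult)
qed

lemma mat3_nth [simp]:
  "mat3 a11 a12 a13 a21 a22 a23 a31 a32 a33 $ 1 $ 1 = a11"
  "mat3 a11 a12 a13 a21 a22 a23 a31 a32 a33 $ 1 $ 2 = a12"
  "mat3 a11 a12 a13 a21 a22 a23 a31 a32 a33 $ 1 $ 3 = a13"
  "mat3 a11 a12 a13 a21 a22 a23 a31 a32 a33 $ 2 $ 1 = a21"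
  "mat3 a11 a12 a13 a21 a22 a23 a31 a32 a33 $ 2 $ 2 = a22"
  "mat3 a11 a12 a13 a21 a22 a23 a31 a32 a33 $ 2 $ 3 = a23"
  "mat3 a11 a12 a13 a21 a22 a23 a31 a32 a33 $ 3 $ 1 = a31"
  "mat3 a11 a12 a13 a21 a22 a23 a31 a32 a33 $ 3 $ 2 = a32"
  "mat3 a11 a12 a13 a21 a22 a23 a31 a32 a33 $ 3 $ 3 = a33"
  by (simp_all add: mat3_def)

definition J3_rescale :: "'a::field \<Rightarrow> 'a \<Rightarrow> 3 \<Rightarrow> 'a" where
  "J3_rescale a y i = (if i = 1 then a * y^2 else if i = 2 then y else 1)"

lemma J3_rescale_nonzero: "a \<noteq> 0 \<Longrightarrow> y \<noteq> 0 \<Longrightarrow> J3_rescale a y i \<noteq> 0"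
  by (simp add: J3_rescale_def)

lemma diag_conj_J3_rescale_X:
  assumes "a \<noteq> 0" and "y \<noteq> 0"
  shows "diag_conj (J3_rescale a y) (mat3 0 1 0  0 0 (l * a)  (m * a * b) 0 0)
       = msmult (a * y) (mat3 0 1 0  0 0 (l * 1)  (m * 1 * (b / (a * y^3))) 0 0)"
  using assms unfolding vec_eq_iff forall_3
  by (simp add: diag_conj_def msmult_def J3_rescale_def field_simps power2_eq_square power3_eq_cube)

lemma diag_conj_J3_rescale_Y:
  assumes "a \<noteq> 0" and "y \<noteq> 0"
  shows "diag_conj (J3_rescale a y) (mat3 0 0 1  (m * a * b) 0 0  0 (l * b) 0)
       = msmult (a * y^2) (mat3 0 0 1  (m * 1 * (b / (a * y^3))) 0 0  0 (l * (b / (a * y^3))) 0)"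
  using assms unfolding vec_eq_iff forall_3
  by (simp add: diag_conj_def msmult_def J3_rescale_def field_simps power2_eq_square power3_eq_cube)

lemma diag_conj_J3_rescale:
  assumes "a \<noteq> 0" and "y \<noteq> 0"
  shows "diag_conj (J3_rescale a y) ` J3 u a b j = J3 u 1 (b / (a * y^3)) j"
  using assms
  by (simp add: J3_def diag_conj_H0 J3_rescale_nonzero diag_conj_span2 span2_msmult
      diag_conj_J3_rescale_X diag_conj_J3_rescale_Y)

lemma primitive_cube_root_of_unity:
  fixes u :: "'a::field"
  assumes "u ^ 3 = 1" and "u \<noteq> 1"
  shows "1 + u + u^2 = 0" and "u \<noteq> 0" and "u^2 \<noteq> 1" and "u^2 \<noteq> u"
proof -
  have "(u - 1) * (1 + u + u^2) = u ^ 3 - 1"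
    by (simp add: algebra_simps power2_eq_square power3_eq_cube)
  then show sum0: "1 + u + u^2 = 0"
    using assms by simp
  show "u \<noteq> 0"
    using assms by auto
  then show "u^2 \<noteq> u"
    using assms(2) by (simp add: power2_eq_square)
  show "u^2 \<noteq> 1"
  proof
    assume "u^2 = 1"
    then have "u ^ 3 = u"
      by (simp add: power2_eq_square power3_eq_cube)
    with assms show False
      by simp
  qed
qed

lemma cube_roots_of_unity:
  fixes u w :: "'a::field"
  assumes "u ^ 3 = 1" and "u \<noteq> 1" and "w ^ 3 = 1"
  shows "w = 1 \<or> w = u \<or> w = u^2"
proof -
  have "(w - 1) * (w - u) * (w - u^2) = w^3 - (1 + u + u^2) * w^2 + u * (1 + u + u^2) * w - u^3"
    by (simp add: algebra_simps power2_eq_square power3_eq_cube)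
  also have "\<dots> = 0"
    using assms primitive_cube_root_of_unity(1)[OF assms(1,2)] by simp
  finally show ?thesis
    by auto
qed

lemma cube_eq_cube_iff:
  fixes u x x0 :: "'a::field"
  assumes "u ^ 3 = 1" and "u \<noteq> 1" and "x0 \<noteq> 0"
  shows "x ^ 3 = x0 ^ 3 \<longleftrightarrow> x \<in> {x0, u * x0, u^2 * x0}"
proof
  assume "x ^ 3 = x0 ^ 3"
  then have "(x / x0) ^ 3 = 1"
    using assms(3) by (simp add: power_divide)
  then have "x / x0 \<in> {1, u, u^2}"
    using cube_roots_of_unity[OF assms(1,2)] by blast
  then show "x \<in> {x0, u * x0, u^2 * x0}"
    using assms(3) by (auto simp: divide_eq_eq)
next
  have "(u^2) ^ 3 = 1"
    using assms(1) by (metis power_mult mult.commute power_one)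
  then show "x \<in> {x0, u * x0, u^2 * x0} \<Longrightarrow> x ^ 3 = x0 ^ 3"
    using assms(1) by (auto simp: power_mult_distrib)
qed

lemma card_cube_fibre:
  fixes u x0 :: "'a::field"
  assumes "u ^ 3 = 1" and "u \<noteq> 1" and "x0 \<noteq> 0"
  shows "card {x. x ^ 3 = x0 ^ 3} = 3"
proof -
  have "{x. x ^ 3 = x0 ^ 3} = {x0, u * x0, u^2 * x0}"
    using cube_eq_cube_iff[OF assms] by blast
  then show ?thesis
    using assms primitive_cube_root_of_unity[OF assms(1,2)] by auto
qed

lemma card_nonzero_eq_three_card_cubes:
  fixes u :: "'a::{field, finite}"
  assumes "u ^ 3 = 1" and "u \<noteq> 1"
  shows "card {x :: 'a. x \<noteq> 0} = 3 * card (cubes :: 'a set)"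
proof -
  have "{x :: 'a. x \<noteq> 0} = (\<Union>c\<in>cubes. {x. x ^ 3 = c})"
    by (auto simp: cubes_def)
  also have "card \<dots> = (\<Sum>c\<in>cubes. card {x :: 'a. x ^ 3 = c})"
    by (rule card_UN_disjoint) auto
  also have "\<dots> = (\<Sum>c\<in>(cubes :: 'a set). 3)"
    using card_cube_fibre[OF assms] by (intro sum.cong) (auto simp: cubes_def)
  finally show ?thesis
    by simp
qed

lemma cubes_divide:
  assumes "x \<in> cubes" and "y \<in> cubes"
  shows "x / y \<in> cubes"
proof -
  obtain v w where "v \<noteq> 0" "w \<noteq> 0" "x = v ^ 3" "y = w ^ 3"
    using assms by (auto simp: cubes_def)
  then have "v / w \<noteq> 0" and "x / y = (v / w) ^ 3"
    by (simp_all add: power_divide)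
  then show ?thesis
    by (auto simp: cubes_def)
qed

lemma nonzero_cube_in_cubes: "x \<noteq> 0 \<Longrightarrow> x ^ 3 \<in> cubes"
  by (auto simp: cubes_def)

lemma mult_cubes_disjoint_cubes:
  assumes "w \<notin> cubes"
  shows "(\<lambda>c. w * c) ` cubes \<inter> cubes = {}"
proof -
  have "w = (w * c) / c" if "c \<in> cubes" for c
    using that by (auto simp: cubes_def)
  then show ?thesis
    using assms cubes_divide by fastforce
qed

lemma square_notin_cubes:
  assumes "z \<noteq> 0" and "z \<notin> cubes"
  shows "z ^ 2 \<notin> cubes"
proof
  assume "z ^ 2 \<in> cubes"
  then have "z ^ 3 / z ^ 2 \<in> cubes"
    using assms(1) by (simp add: cubes_divide nonzero_cube_in_cubes)
  with assms show False
    by (simp add: power2_eq_square power3_eq_cube)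
qed

lemma nonzero_in_cube_cosets:
  fixes u z t :: "'a::{field, finite}"
  assumes "u ^ 3 = 1" and "u \<noteq> 1" and "z \<noteq> 0" and "z \<notin> cubes" and "t \<noteq> 0"
  shows "t \<in> cubes \<or> t \<in> (\<lambda>c. z * c) ` cubes \<or> t \<in> (\<lambda>c. z^2 * c) ` cubes"
proof -
  let ?C1 = "(\<lambda>c. z * c) ` cubes" and ?C2 = "(\<lambda>c. z^2 * c) ` cubes"
  have card_cosets: "card ?C1 = card (cubes :: 'a set)" "card ?C2 = card (cubes :: 'a set)"
    using assms(3) by (auto intro!: card_image inj_onI)
  have "cubes \<inter> ?C1 = {}" "cubes \<inter> ?C2 = {}"
    using mult_cubes_disjoint_cubes[of z] mult_cubes_disjoint_cubes[of "z^2"]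
      square_notin_cubes[OF assms(3,4)] assms(4) by blast+
  moreover have "?C1 \<inter> ?C2 = {}"
    using mult_cubes_disjoint_cubes[OF assms(4)] assms(3)
    by (auto simp: power2_eq_square)
  ultimately have "card (cubes \<union> ?C1 \<union> ?C2) = card {x :: 'a. x \<noteq> 0}"
    using card_cosets card_nonzero_eq_three_card_cubes[OF assms(1,2)]
    by (simp add: card_Un_disjoint Int_Un_distrib2)
  moreover have "cubes \<union> ?C1 \<union> ?C2 \<subseteq> {x. x \<noteq> 0}"
    using assms(3) by (auto simp: cubes_def)
  ultimately have "cubes \<union> ?C1 \<union> ?C2 = {x. x \<noteq> 0}"
    by (simp add: card_subset_eq)
  with assms(5) show ?thesis
    by blast
qed

lemma lamJ_inj:
  fixes u :: "'a::field"
  assumes "u ^ 3 = 1" and "u \<noteq> 1" and "j \<in> {1, 2, 3}" and "k \<in> {1, 2, 3}"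
    and "lamJ u j = lamJ u k"
  shows "j = k"
  using assms primitive_cube_root_of_unity[OF assms(1,2)] by (auto simp: lamJ_def split: if_splits)

lemma J3_generator_mem:
  "j \<noteq> 0 \<Longrightarrow> mat3 0 1 0  0 0 (lamJ u j)  (muJ u j * c) 0 0 \<in> J3 u 1 c j"
  unfolding J3_def span2_def
  by (auto simp: msmult_def vec_eq_iff forall_3 intro!: exI[of _ 1] exI[of _ 0])

lemma J3_generator_notin_H0: "mat3 0 1 0  0 0 l m 0 0 \<notin> H0"
  by (simp add: H0_def exI[of _ 1] exI[of _ 2])

text \<open>In \<open>J3 u 1 c k\<close>, \<open>k \<noteq> 0\<close>, the \<open>(2,3)\<close> entry is \<open>lamJ u k\<close> times the \<open>(1,2)\<close> entry.\<close>
lemma J3_generator_mem_imp_lamJ_eq: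
  assumes "k \<noteq> 0" and "mat3 0 1 0  0 0 (lamJ u j)  (muJ u j * c) 0 0 \<in> J3 u 1 c k"
  shows "lamJ u j = lamJ u k"
proof -
  from assms obtain s t where st:
    "mat3 0 1 0  0 0 (lamJ u j)  (muJ u j * c) 0 0 =
     msmult s (mat3 0 1 0  0 0 (lamJ u k * 1)  (muJ u k * 1 * c) 0 0)
     + msmult t (mat3 0 0 1  (muJ u k * 1 * c) 0 0  0 (lamJ u k * c) 0)"
    by (auto simp: J3_def span2_def)
  have "s = 1" and "t = 0" and "lamJ u j = s * lamJ u k + t * (muJ u k * c)"
    using st[THEN arg_cong, of "\<lambda>M. M $ 1 $ 2"] st[THEN arg_cong, of "\<lambda>M. M $ 1 $ 3"]
      st[THEN arg_cong, of "\<lambda>M. M $ 2 $ 3"]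
    by (simp_all add: msmult_def)
  then show ?thesis
    by simp
qed

lemma J3_inj:
  fixes u c :: "'a::field"
  assumes "u ^ 3 = 1" and "u \<noteq> 1" and "j < 4" and "k < 4" and "J3 u 1 c j = J3 u 1 c k"
  shows "j = k"
proof (rule ccontr)
  assume "j \<noteq> k"
  have mem_j: "mat3 0 1 0  0 0 (lamJ u j)  (muJ u j * c) 0 0 \<in> J3 u 1 c k" if "j \<noteq> 0"
    using J3_generator_mem[where u = u and c = c, OF that] assms(5) by simp
  have mem_k: "mat3 0 1 0  0 0 (lamJ u k)  (muJ u k * c) 0 0 \<in> J3 u 1 c j" if "k \<noteq> 0"
    using J3_generator_mem[where u = u and c = c, OF that] assms(5) by simp
  consider "j = 0" "k \<noteq> 0" | "j \<noteq> 0" "k = 0" | "j \<noteq> 0" "k \<noteq> 0"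
    using \<open>j \<noteq> k\<close> by auto
  then show False
  proof cases
    case 1
    then show False
      using mem_k J3_generator_notin_H0 by (auto simp: J3_def)
  next
    case 2
    then show False
      using mem_j J3_generator_notin_H0 by (auto simp: J3_def)
  next
    case 3
    then have "lamJ u j = lamJ u k"
      using J3_generator_mem_imp_lamJ_eq mem_j by blast
    moreover have "j \<in> {1, 2, 3}" and "k \<in> {1, 2, 3}"
      using 3 assms(3,4) by auto
    ultimately show False
      using lamJ_inj[OF assms(1,2)] \<open>j \<noteq> k\<close> by blast
  qed
qed

lemma conj_dec_J3_rescale:
  fixes u a b y :: "'a::field"
  assumes "u ^ 3 = 1" and "u \<noteq> 1" and "a \<noteq> 0" and "y \<noteq> 0"
  shows "conj_dec (J3 u a b) (J3 u 1 (b / (a * y^3)))"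
  unfolding conj_dec_def
proof (intro exI conjI allI impI)
  show "sl3_aut (diag_conj (J3_rescale a y))"
    using assms by (simp add: sl3_aut_diag_conj J3_rescale_nonzero)
  fix j :: nat assume "j < 4"
  then show "\<exists>!k. k < 4 \<and> diag_conj (J3_rescale a y) ` J3 u a b j = J3 u 1 (b / (a * y^3)) k"
    using assms J3_inj[OF assms(1,2) \<open>j < 4\<close>]
    by (intro ex1I[of _ j]) (auto simp: diag_conj_J3_rescale)
qed

lemma one_in_cubes: "1 \<in> cubes"
  by (auto simp: cubes_def intro!: exI[of _ 1])

theorem proposition3p10:
  fixes u z a b :: "'a::{field, finite}"
  assumes "CHAR('a) > 3"
    and "3 dvd (CARD('a) - 1)"
    and "u ^ 3 = 1" and "u \<noteq> 1"
    and "z \<noteq> 0" and "z \<notin> cubes"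
    and "a \<noteq> 0" and "b \<noteq> 0"
  shows "(a / b \<in> cubes \<longrightarrow> conj_dec (J3 u a b) (J3 u 1 1))
       \<and> (a / b \<notin> cubes \<longrightarrow>
            conj_dec (J3 u a b) (J3 u 1 z) \<or> conj_dec (J3 u a b) (J3 u 1 (z ^ 2)))"
proof (intro conjI impI)
  assume "a / b \<in> cubes"
  then obtain w where "w \<noteq> 0" and "a / b = w ^ 3"
    by (auto simp: cubes_def)
  then have "b / (a * (1 / w) ^ 3) = 1"
    using assms(7,8) by (simp add: field_simps power_divide)
  then show "conj_dec (J3 u a b) (J3 u 1 1)"
    using conj_dec_J3_rescale[OF assms(3,4,7), of "1 / w" b] \<open>w \<noteq> 0\<close> by simp
next
  assume "a / b \<notin> cubes"
  then have "b / a \<notin> cubes"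
    using cubes_divide[OF one_in_cubes, of "b / a"] by auto
  then obtain c where "c \<in> cubes" and "b / a = z * c \<or> b / a = z ^ 2 * c"
    using nonzero_in_cube_cosets[OF assms(3-6), of "b / a"] assms(7,8) by auto
  then obtain y where "y \<noteq> 0" and "b / (a * y ^ 3) = z \<or> b / (a * y ^ 3) = z ^ 2"
    using assms(7) by (auto simp: cubes_def field_simps)
  then show "conj_dec (J3 u a b) (J3 u 1 z) \<or> conj_dec (J3 u a b) (J3 u 1 (z ^ 2))"
    using conj_dec_J3_rescale[OF assms(3,4,7)] by metis
qed

end
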